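(* Let $V:\mathbb R^n\to\mathbb R$ be $C^2$ with $\int e^{-V}<\infty$, and let $(X_t)$ solve $X_t=X_0+\sqrt2B_t-\int_0^t\nabla V(X_s)ds$. Let $\rho$ satisfy $\langle u,\operatorname{Hess}V(x)u\rangle\ge\rho(x)|u|^2$ for all $x,u$, with $\rho\ge\rho_0\ge0$. Define $\rho_{inf}(|x|)=\inf_{|y|\le|x|}\rho(y)$ and $\rho_{sup}(|x|)=\inf_{|y|\ge|x|}\rho(y)$. If $\rho_{inf}$ is non-increasing on $(a,+\infty)$ for some $a\ge0$, then for all $x,y\in\mathbb R^n$ and $t\ge0$, $$W_1(P_t^*\delta_x,P_t^*\delta_y)\le|x-y|\,\mathbb E_x\Big[e^{-\int_0^t\mathbf 1_{|X_s|>a+|x-y|}\rho_{inf}(|X_s|+|x-y|)ds}\Big];$$ respectively, if $\rho_{sup}$ is non-decreasing on $(a,+\infty)$ for some $a\ge0$, then $$W_1(P_t^*\delta_x,P_t^*\delta_y)\le|x-y|\,\mathbb E_x\Big[e^{-\int_0^t\mathbf 1_{|X_s|>a+|x-y|}\rho_{sup}(|X_s|-|x-y|)ds}\Big].$$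
   Context: $P_t^*\delta_x$ is the law of $X_t$ started at $x$; $\mathbb E_x$ denotes expectation for the process started at $x$. $W_1$: $L^1$ Wasserstein distance. *)

theory Defs
  imports "HOL-Probability.Probability"
begin

definition brownian_motion :: "'a measure \<Rightarrow> (real \<Rightarrow> 'a \<Rightarrow> real^'n) \<Rightarrow> bool" where
  "brownian_motion M B \<longleftrightarrow>
     prob_space M \<and>
     (\<forall>t. B t \<in> borel_measurable M) \<and>
     (\<forall>\<omega>\<in>space M. B 0 \<omega> = 0 \<and> continuous_on {0..} (\<lambda>t. B t \<omega>)) \<and>
     (\<forall>s t. 0 \<le> s \<longrightarrow> s < t \<longrightarrow>
        distr M lborel (\<lambda>\<omega>. B t \<omega> - B s \<omega>) =
        density lborel (\<lambda>z. ennreal (\<Prod>i\<in>UNIV. normal_density 0 (sqrt (t - s)) (z $ i)))) \<and>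
     (\<forall>ts. sorted ts \<longrightarrow> (\<forall>r\<in>set ts. 0 \<le> r) \<longrightarrow>
        prob_space.indep_vars M (\<lambda>_. borel)
          (\<lambda>j \<omega>. B (ts ! Suc j) \<omega> - B (ts ! j) \<omega>) {..<length ts - 1})"

definition C2_grad_hess ::
  "(real^'n \<Rightarrow> real) \<Rightarrow> (real^'n \<Rightarrow> real^'n) \<Rightarrow> (real^'n \<Rightarrow> real^'n \<Rightarrow> real^'n) \<Rightarrow> bool" where
  "C2_grad_hess V G H \<longleftrightarrow>
     (\<forall>x. (V has_derivative (\<lambda>h. G x \<bullet> h)) (at x)) \<and>
     (\<forall>x. (G has_derivative H x) (at x)) \<and>
     (\<forall>u. continuous_on UNIV (\<lambda>x. H x u))"

definition couplings :: "'b::topological_space measure \<Rightarrow> 'b measure \<Rightarrow> ('b \<times> 'b) measure set" where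
  "couplings \<mu> \<nu> = {\<pi>. prob_space \<pi> \<and> sets \<pi> = sets (borel :: ('b \<times> 'b) measure) \<and>
       distr \<pi> borel fst = \<mu> \<and> distr \<pi> borel snd = \<nu>}"

definition W1 :: "'b::metric_space measure \<Rightarrow> 'b measure \<Rightarrow> ennreal" where
  "W1 \<mu> \<nu> = (INF \<pi>\<in>couplings \<mu> \<nu>. \<integral>\<^sup>+ p. ennreal (dist (fst p) (snd p)) \<partial>\<pi>)"

definition rho_inf :: "(real^'n \<Rightarrow> real) \<Rightarrow> real \<Rightarrow> real" where
  "rho_inf \<rho> r = Inf {\<rho> y | y. norm y \<le> r}"

definition rho_sup :: "(real^'n \<Rightarrow> real) \<Rightarrow> real \<Rightarrow> real" where
  "rho_sup \<rho> r = Inf {\<rho> y | y. norm y \<ge> r}"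

end

(* Synchronous coupling: drive the diffusions started at x and at y by the same Brownian path.
   The noise cancels in D = X x - X y, which solves D' = -(grad V (X x) - grad V (X y)).
   By the mean value theorem along the segment between X y and X x, the inner product
   <grad V a - grad V b, a - b> is at least the infimum of \<rho> on that segment times |a - b|^2.
   Hence |D| is non-increasing, the whole segment stays within |x - y| of X x, and there
   rho_inf (|X x| + |x - y|), resp. rho_sup (|X x| - |x - y|), bounds \<rho> from below.
   Integrating d/ds ln |D| then gives |D t| <= |x - y| exp (- \<integral> k (X x s) ds) pathwise,
   and the coupling bounds W1 by the expectation of the right-hand side. *)

theory Submission
  imports Defs
begin

lemma inner_gradient_diff_ge:
  fixes G :: "'a::real_inner \<Rightarrow> 'a" and H :: "'a \<Rightarrow> 'a \<Rightarrow> 'a"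
  assumes GH: "\<And>x. (G has_derivative H x) (at x)"
    and hess: "\<And>x u. \<rho> x * (norm u)\<^sup>2 \<le> H x u \<bullet> u"
    and segment: "\<And>\<theta>. 0 \<le> \<theta> \<Longrightarrow> \<theta> \<le> 1 \<Longrightarrow> \<kappa> \<le> \<rho> (b + \<theta> *\<^sub>R (a - b))"
  shows "\<kappa> * (norm (a - b))\<^sup>2 \<le> (G a - G b) \<bullet> (a - b)"
proof -
  define \<gamma> where "\<gamma> \<theta> = b + \<theta> *\<^sub>R (a - b)" for \<theta>
  define \<phi> where "\<phi> \<theta> = G (\<gamma> \<theta>) \<bullet> (a - b)" for \<theta>
  have "DERIV \<phi> \<theta> :> H (\<gamma> \<theta>) (a - b) \<bullet> (a - b)" for \<theta>
  proof -
    have "((\<lambda>\<theta>. G (\<gamma> \<theta>)) has_derivative (\<lambda>h. H (\<gamma> \<theta>) (h *\<^sub>R (a - b)))) (at \<theta>)"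
      unfolding \<gamma>_def by (rule has_derivative_compose[OF _ GH, unfolded o_def]) (auto intro!: derivative_eq_intros)
    then have "(\<phi> has_derivative (\<lambda>h. H (\<gamma> \<theta>) (h *\<^sub>R (a - b)) \<bullet> (a - b))) (at \<theta>)"
      unfolding \<phi>_def by (rule has_derivative_inner_left)
    moreover have "linear (H (\<gamma> \<theta>))" using GH has_derivative_linear by blast
    ultimately show ?thesis unfolding has_field_derivative_def
      by (auto elim!: has_derivative_eq_rhs simp: fun_eq_iff linear_scale)
  qed
  then obtain z where z: "0 < z" "z < 1" "\<phi> 1 - \<phi> 0 = H (\<gamma> z) (a - b) \<bullet> (a - b)"
    using MVT2[of 0 1 \<phi>] by force
  have "\<kappa> * (norm (a - b))\<^sup>2 \<le> \<rho> (\<gamma> z) * (norm (a - b))\<^sup>2"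
    using segment[of z] z unfolding \<gamma>_def by (intro mult_right_mono) auto
  also have "\<dots> \<le> \<phi> 1 - \<phi> 0" using hess z(3) by simp
  also have "\<dots> = (G a - G b) \<bullet> (a - b)" unfolding \<phi>_def \<gamma>_def by (simp add: inner_diff_left)
  finally show ?thesis .
qed

lemma norm_antimono_of_dissipative:
  fixes D F :: "real \<Rightarrow> 'a::real_inner"
  assumes D': "\<And>s. s \<in> {a..b} \<Longrightarrow> (D has_vector_derivative - F s) (at s within {a..b})"
    and dissipative: "\<And>s. s \<in> {a..b} \<Longrightarrow> 0 \<le> F s \<bullet> D s"
    and "a \<le> u" "u \<le> v" "v \<le> b"
  shows "norm (D v) \<le> norm (D u)"
proof -
  have "((\<lambda>s. D s \<bullet> D s) has_vector_derivative - 2 * (F s \<bullet> D s)) (at s within {u..v})"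
    if "s \<in> {u..v}" for s
  proof -
    have "(D has_derivative (\<lambda>h. h *\<^sub>R - F s)) (at s within {u..v})"
      using D'[of s] that assms(3-5) unfolding has_vector_derivative_def
      by (auto intro: has_derivative_subset)
    from has_derivative_inner[OF this this] show ?thesis
      unfolding has_vector_derivative_def
      by (auto elim!: has_derivative_eq_rhs simp: fun_eq_iff inner_commute algebra_simps)
  qed
  then have "((\<lambda>s. - 2 * (F s \<bullet> D s)) has_integral D v \<bullet> D v - D u \<bullet> D u) {u..v}"
    using \<open>u \<le> v\<close> by (intro fundamental_theorem_of_calculus) auto
  then have "D v \<bullet> D v - D u \<bullet> D u \<le> 0"
    by (rule has_integral_le[OF _ has_integral_0]) (use dissipative assms(3-5) in auto)
  then show ?thesis by (simp add: norm_eq_sqrt_inner)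
qed

(* The nonnegativity of g covers a non-integrable f, whose integral is 0 by convention. *)
lemma set_integral_le_has_integral:
  fixes f g :: "'a::euclidean_space \<Rightarrow> real"
  assumes g: "(g has_integral I) S"
    and le: "\<And>x. x \<in> S \<Longrightarrow> f x \<le> g x" and nonneg: "\<And>x. x \<in> S \<Longrightarrow> 0 \<le> g x"
  shows "(LINT x:S|lborel. f x) \<le> I"
proof (cases "set_integrable lborel S f")
  case True
  then have "(f has_integral (LINT x:S|lborel. f x)) S"
    using set_borel_integral_eq_integral[OF True] by (simp add: has_integral_integral)
  then show ?thesis by (rule has_integral_le[OF _ g]) (use le in auto)
next
  case False
  then have "(LINT x:S|lborel. f x) = 0"
    unfolding set_lebesgue_integral_def set_integrable_def by (simp add: not_integrable_integral_eq)
  then show ?thesis using has_integral_nonneg[OF g nonneg] by simp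
qed

lemma norm_le_exp_integral_of_dissipative:
  fixes D F :: "real \<Rightarrow> 'a::real_inner" and k :: "real \<Rightarrow> real"
  assumes "0 \<le> t"
    and D': "\<And>s. s \<in> {0..t} \<Longrightarrow> (D has_vector_derivative - F s) (at s within {0..t})"
    and dissipative: "\<And>s. s \<in> {0..t} \<Longrightarrow> 0 \<le> F s \<bullet> D s"
    and k: "\<And>s. s \<in> {0..t} \<Longrightarrow> k s * (norm (D s))\<^sup>2 \<le> F s \<bullet> D s"
  shows "norm (D t) \<le> norm (D 0) * exp (- (LINT s:{0..t}|lborel. k s))"
proof (cases "D t = 0")
  case False
  have pos: "0 < D s \<bullet> D s" if "s \<in> {0..t}" for s
    using norm_antimono_of_dissipative[OF D' dissipative, of s t] that False by fastforce
  define c where "c s = (F s \<bullet> D s) / (D s \<bullet> D s)" for s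
  define g where "g s = ln (D s \<bullet> D s) / 2" for s
  have "(g has_vector_derivative - c s) (at s within {0..t})" if "s \<in> {0..t}" for s
  proof -
    have "(D has_derivative (\<lambda>h. h *\<^sub>R - F s)) (at s within {0..t})"
      using D'[OF that] by (simp add: has_vector_derivative_def)
    from has_derivative_inner[OF this this]
    have "((\<lambda>s. D s \<bullet> D s) has_real_derivative - 2 * (F s \<bullet> D s)) (at s within {0..t})"
      unfolding has_field_derivative_def
      by (auto elim!: has_derivative_eq_rhs simp: fun_eq_iff inner_commute algebra_simps)
    then show ?thesis
      unfolding g_def c_def has_real_derivative_iff_has_vector_derivative[symmetric]
      using pos[OF that] by (auto intro!: derivative_eq_intros)
  qed
  then have "((\<lambda>s. - c s) has_integral g t - g 0) {0..t}"
    using \<open>0 \<le> t\<close> by (intro fundamental_theorem_of_calculus) auto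
  from has_integral_neg[OF this] have "(c has_integral g 0 - g t) {0..t}"
    by simp
  moreover have "k s \<le> c s" "0 \<le> c s" if "s \<in> {0..t}" for s
    using k[OF that] dissipative[OF that] pos[OF that]
    by (simp_all add: c_def power2_norm_eq_inner pos_le_divide_eq)
  ultimately have L: "(LINT s:{0..t}|lborel. k s) \<le> g 0 - g t"
    by (rule set_integral_le_has_integral)
  have norm_exp: "norm (D s) = exp (g s)" if "s \<in> {0..t}" for s
  proof -
    have "exp (g s) = (D s \<bullet> D s) powr (1 / 2)"
      using pos[OF that] by (simp add: g_def powr_def)
    then show ?thesis by (simp add: powr_half_sqrt norm_eq_sqrt_inner)
  qed
  have "norm (D t) = exp (g t)" using norm_exp \<open>0 \<le> t\<close> by simp
  also have "\<dots> \<le> exp (g 0 - (LINT s:{0..t}|lborel. k s))" using L by simp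
  also have "\<dots> = norm (D 0) * exp (- (LINT s:{0..t}|lborel. k s))"
    using norm_exp[of 0] \<open>0 \<le> t\<close> by (simp add: exp_diff exp_minus field_simps)
  finally show ?thesis .
qed simp

lemma dist_le_exp_integral_of_common_noise:
  fixes G :: "'a::{real_inner, banach} \<Rightarrow> 'a" and H :: "'a \<Rightarrow> 'a \<Rightarrow> 'a"
    and p q w :: "real \<Rightarrow> 'a" and k \<rho> :: "'a \<Rightarrow> real"
  assumes GH: "\<And>x. (G has_derivative H x) (at x)"
    and hess: "\<And>x u. \<rho> x * (norm u)\<^sup>2 \<le> H x u \<bullet> u"
    and \<rho>_nonneg: "\<And>z. 0 \<le> \<rho> z"
    and k_le: "\<And>v z. dist z v \<le> dist x y \<Longrightarrow> k v \<le> \<rho> z"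
    and "0 \<le> t"
    and cont: "continuous_on {0..t} p" "continuous_on {0..t} q"
    and p: "\<And>s. s \<in> {0..t} \<Longrightarrow> p s = x + w s - integral {0..s} (\<lambda>r. G (p r))"
    and q: "\<And>s. s \<in> {0..t} \<Longrightarrow> q s = y + w s - integral {0..s} (\<lambda>r. G (q r))"
  shows "dist (p t) (q t) \<le> dist x y * exp (- (LINT s:{0..t}|lborel. k (p s)))"
proof -
  define F where "F s = G (p s) - G (q s)" for s
  define D where "D s = (x - y) - integral {0..s} F" for s
  have G_cont: "continuous_on UNIV G"
    using GH has_derivative_continuous continuous_at_imp_continuous_on by blast
  then have F_cont: "continuous_on {0..t} F"
    unfolding F_def using cont by (intro continuous_intros) (auto elim: continuous_on_compose2)
  have D_eq: "D s = p s - q s" if "s \<in> {0..t}" for s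
  proof -
    have "continuous_on {0..s} (\<lambda>r. G (p r))" "continuous_on {0..s} (\<lambda>r. G (q r))"
      using G_cont cont that by (auto elim!: continuous_on_subset continuous_on_compose2)
    then have "integral {0..s} F = integral {0..s} (\<lambda>r. G (p r)) - integral {0..s} (\<lambda>r. G (q r))"
      unfolding F_def by (intro integral_diff integrable_continuous_interval)
    then have "D s = (x + w s - integral {0..s} (\<lambda>r. G (p r))) - (y + w s - integral {0..s} (\<lambda>r. G (q r)))"
      unfolding D_def by (simp add: algebra_simps)
    also have "\<dots> = p s - q s" using p[OF that] q[OF that] by simp
    finally show ?thesis .
  qed
  have D': "(D has_vector_derivative - F s) (at s within {0..t})" if "s \<in> {0..t}" for s
    unfolding D_def using integral_has_vector_derivative[OF F_cont that]
    by (auto intro!: derivative_eq_intros)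
  have dissipative: "0 \<le> F s \<bullet> D s" if "s \<in> {0..t}" for s
    using inner_gradient_diff_ge[OF GH hess, of 0] \<rho>_nonneg D_eq[OF that] unfolding F_def by simp
  have "k (p s) * (norm (D s))\<^sup>2 \<le> F s \<bullet> D s" if "s \<in> {0..t}" for s
  proof -
    have "norm (D s) \<le> norm (D 0)"
      using norm_antimono_of_dissipative[OF D' dissipative, of 0 s] that by auto
    then have close: "norm (p s - q s) \<le> dist x y"
      using D_eq[OF that] by (simp add: D_def dist_norm)
    have "k (p s) \<le> \<rho> (q s + \<theta> *\<^sub>R (p s - q s))" if "0 \<le> \<theta>" "\<theta> \<le> 1" for \<theta>
    proof (rule k_le)
      have "dist (q s + \<theta> *\<^sub>R (p s - q s)) (p s) = norm ((1 - \<theta>) *\<^sub>R (p s - q s))"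
        by (simp add: dist_norm algebra_simps norm_minus_commute)
      also have "\<dots> = (1 - \<theta>) * norm (p s - q s)" using that by simp
      also have "\<dots> \<le> dist x y" using that close mult_right_mono[of "1 - \<theta>" 1 "norm (p s - q s)"] by simp
      finally show "dist (q s + \<theta> *\<^sub>R (p s - q s)) (p s) \<le> dist x y" .
    qed
    then show ?thesis
      using inner_gradient_diff_ge[OF GH hess] D_eq[OF that] unfolding F_def by simp
  qed
  from norm_le_exp_integral_of_dissipative[OF \<open>0 \<le> t\<close> D' dissipative this]
  show ?thesis using D_eq \<open>0 \<le> t\<close> by (simp add: D_def dist_norm)
qed

lemma ceiling_grid_tendsto: "(\<lambda>n. real_of_int \<lceil>real (Suc n) * s\<rceil> / real (Suc n)) \<longlonglongrightarrow> s"
proof (rule tendsto_sandwich[of "\<lambda>n. s" _ _ "\<lambda>n. s + 1 / real (Suc n)"])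
  show "\<forall>\<^sub>F n in sequentially. s \<le> real_of_int \<lceil>real (Suc n) * s\<rceil> / real (Suc n)"
    by (auto simp: pos_le_divide_eq mult.commute)
  have "real_of_int \<lceil>real (Suc n) * s\<rceil> / real (Suc n) \<le> (real (Suc n) * s + 1) / real (Suc n)" for n
    by (intro divide_right_mono) linarith+
  then show "\<forall>\<^sub>F n in sequentially. real_of_int \<lceil>real (Suc n) * s\<rceil> / real (Suc n) \<le> s + 1 / real (Suc n)"
    by (simp add: add_divide_distrib)
  have "(\<lambda>n. s + 1 / real (Suc n)) \<longlonglongrightarrow> s + 0"
    by (intro tendsto_intros LIMSEQ_Suc[OF lim_inverse_n'[unfolded inverse_eq_divide]])
  then show "(\<lambda>n. s + 1 / real (Suc n)) \<longlonglongrightarrow> s" by simp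
qed simp

lemma borel_measurable_continuous_process:
  fixes Z :: "real \<Rightarrow> 'a \<Rightarrow> 'b::metric_space"
  assumes meas: "\<And>t. Z t \<in> borel_measurable M"
    and cont: "\<And>\<omega>. \<omega> \<in> space M \<Longrightarrow> continuous_on {0..} (\<lambda>t. Z t \<omega>)"
  shows "(\<lambda>(\<omega>, s). Z (max 0 s) \<omega>) \<in> borel_measurable (M \<Otimes>\<^sub>M lborel)"
proof (rule borel_measurable_LIMSEQ_metric)
  define grid where "grid n s = max 0 (real_of_int \<lceil>real (Suc n) * s\<rceil> / real (Suc n))" for n s
  show "(\<lambda>(\<omega>, s::real). Z (grid n s) \<omega>) \<in> borel_measurable (M \<Otimes>\<^sub>M lborel)" for n
  proof -
    have "(\<lambda>p. (\<lambda>j p. Z (max 0 (real_of_int j / real (Suc n))) (fst p)) \<lceil>real (Suc n) * snd p\<rceil> p)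
          \<in> borel_measurable (M \<Otimes>\<^sub>M lborel)"
    proof (rule measurable_compose_countable[where f = "\<lambda>j p. Z (max 0 (real_of_int j / real (Suc n))) (fst p)"])
      show "(\<lambda>p. Z (max 0 (real_of_int j / real (Suc n))) (fst p)) \<in> borel_measurable (M \<Otimes>\<^sub>M lborel)" for j
        using measurable_compose[OF measurable_fst meas] by (simp add: o_def)
      show "(\<lambda>p. \<lceil>real (Suc n) * snd p\<rceil>) \<in> M \<Otimes>\<^sub>M lborel \<rightarrow>\<^sub>M count_space UNIV"
        by measurable
    qed
    then show ?thesis unfolding grid_def by (simp add: case_prod_beta)
  qed
  fix p :: "'a \<times> real" assume "p \<in> space (M \<Otimes>\<^sub>M lborel)"
  then obtain \<omega> s where p: "p = (\<omega>, s)" and \<omega>: "\<omega> \<in> space M"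
    by (cases p) (simp add: space_pair_measure)
  have "(\<lambda>n. grid n s) \<longlonglongrightarrow> max 0 s"
    unfolding grid_def by (intro tendsto_intros ceiling_grid_tendsto)
  from continuous_on_tendsto_compose[OF cont[OF \<omega>] this]
  show "(\<lambda>n. (\<lambda>(\<omega>, s). Z (grid n s) \<omega>) p) \<longlonglongrightarrow> (\<lambda>(\<omega>, s). Z (max 0 s) \<omega>) p"
    unfolding p grid_def by simp
qed

lemma borel_measurable_set_integral_continuous_process:
  fixes Z :: "real \<Rightarrow> 'a \<Rightarrow> 'b::metric_space" and k :: "'b \<Rightarrow> real"
  assumes "\<And>t. Z t \<in> borel_measurable M"
    and "\<And>\<omega>. \<omega> \<in> space M \<Longrightarrow> continuous_on {0..} (\<lambda>t. Z t \<omega>)"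
    and k: "k \<in> borel_measurable borel"
  shows "(\<lambda>\<omega>. LINT s:{0..t}|lborel. k (Z s \<omega>)) \<in> borel_measurable M"
proof -
  have "(\<lambda>(\<omega>, s). Z (max 0 s) \<omega>) \<in> borel_measurable (M \<Otimes>\<^sub>M lborel)"
    using assms(1,2) by (rule borel_measurable_continuous_process)
  from measurable_compose[OF this k]
  have "(\<lambda>(\<omega>, s). indicator {0..t} s *\<^sub>R k (Z (max 0 s) \<omega>)) \<in> borel_measurable (M \<Otimes>\<^sub>M lborel)"
    unfolding case_prod_beta o_def by measurable
  from lborel.borel_measurable_lebesgue_integral[OF this]
  have "(\<lambda>\<omega>. \<integral>s. indicator {0..t} s *\<^sub>R k (Z (max 0 s) \<omega>) \<partial>lborel) \<in> borel_measurable M"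
    by simp
  moreover have "(LINT s:{0..t}|lborel. k (Z s \<omega>)) = (\<integral>s. indicator {0..t} s *\<^sub>R k (Z (max 0 s) \<omega>) \<partial>lborel)" for \<omega>
    unfolding set_lebesgue_integral_def by (rule Bochner_Integration.integral_cong) (auto simp: indicator_def)
  ultimately show ?thesis by simp
qed

lemma W1_le_nn_integral_dist:
  fixes X Y :: "'a \<Rightarrow> 'b::{metric_space, second_countable_topology}"
  assumes "prob_space M" and X: "X \<in> borel_measurable M" and Y: "Y \<in> borel_measurable M"
  shows "W1 (distr M borel X) (distr M borel Y) \<le> (\<integral>\<^sup>+ \<omega>. ennreal (dist (X \<omega>) (Y \<omega>)) \<partial>M)"
proof -
  define \<pi> where "\<pi> = distr M borel (\<lambda>\<omega>. (X \<omega>, Y \<omega>))"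
  have XY: "(\<lambda>\<omega>. (X \<omega>, Y \<omega>)) \<in> borel_measurable M"
    using X Y by (rule borel_measurable_Pair)
  have fst: "fst \<in> borel_measurable (borel :: ('b \<times> 'b) measure)"
    and snd: "snd \<in> borel_measurable (borel :: ('b \<times> 'b) measure)"
    by (auto intro!: borel_measurable_continuous_onI continuous_intros)
  have "\<pi> \<in> couplings (distr M borel X) (distr M borel Y)"
    unfolding couplings_def \<pi>_def
    using prob_space.prob_space_distr[OF \<open>prob_space M\<close> XY]
      distr_distr[OF fst XY] distr_distr[OF snd XY]
    by (simp add: o_def)
  then have "W1 (distr M borel X) (distr M borel Y) \<le> (\<integral>\<^sup>+ p. ennreal (dist (fst p) (snd p)) \<partial>\<pi>)"
    unfolding W1_def by (rule INF_lower)
  also have "\<dots> = (\<integral>\<^sup>+ \<omega>. ennreal (dist (X \<omega>) (Y \<omega>)) \<partial>M)"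
    unfolding \<pi>_def
    by (subst nn_integral_distr[OF XY]) (auto intro!: borel_measurable_continuous_onI continuous_intros)
  finally show ?thesis .
qed

lemma W1_le_expectation_exp_integral:
  fixes G :: "'b::euclidean_space \<Rightarrow> 'b" and H :: "'b \<Rightarrow> 'b \<Rightarrow> 'b" and \<rho> k :: "'b \<Rightarrow> real"
    and X :: "'b \<Rightarrow> real \<Rightarrow> 'a \<Rightarrow> 'b" and B :: "real \<Rightarrow> 'a \<Rightarrow> 'b"
  assumes GH: "\<And>x. (G has_derivative H x) (at x)"
    and "prob_space M"
    and Xmeas: "\<And>x t. X x t \<in> borel_measurable M"
    and Xcont: "\<And>x \<omega>. \<omega> \<in> space M \<Longrightarrow> continuous_on {0..} (\<lambda>t. X x t \<omega>)"
    and Xsde: "\<And>x \<omega> t. \<omega> \<in> space M \<Longrightarrow> 0 \<le> t \<Longrightarrow>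
       X x t \<omega> = x + sqrt 2 *\<^sub>R B t \<omega> - integral {0..t} (\<lambda>s. G (X x s \<omega>))"
    and hess: "\<And>x u. \<rho> x * (norm u)\<^sup>2 \<le> H x u \<bullet> u"
    and \<rho>_nonneg: "\<And>z. 0 \<le> \<rho> z"
    and k_nonneg: "\<And>v. 0 \<le> k v"
    and k_le: "\<And>v z. dist z v \<le> dist x y \<Longrightarrow> k v \<le> \<rho> z"
    and k_meas: "k \<in> borel_measurable borel"
    and "0 \<le> t"
  shows "W1 (distr M borel (X x t)) (distr M borel (X y t)) \<le>
    ennreal (dist x y * (\<integral>\<omega>. exp (- (LINT s:{0..t}|lborel. k (X x s \<omega>))) \<partial>M))"
proof -
  interpret prob_space M by fact
  define E where "E \<omega> = exp (- (LINT s:{0..t}|lborel. k (X x s \<omega>)))" for \<omega>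
  have pathwise: "dist (X x t \<omega>) (X y t \<omega>) \<le> dist x y * E \<omega>" if "\<omega> \<in> space M" for \<omega>
    unfolding E_def
    using Xsde[OF that]
    by (intro dist_le_exp_integral_of_common_noise[OF GH hess \<rho>_nonneg k_le \<open>0 \<le> t\<close>])
      (auto intro: continuous_on_subset[OF Xcont[OF that]])
  have E_meas: "E \<in> borel_measurable M"
    unfolding E_def
    using borel_measurable_set_integral_continuous_process[OF Xmeas Xcont k_meas] by measurable
  have E_bounds: "0 \<le> E \<omega>" "E \<omega> \<le> 1" for \<omega>
  proof -
    have "0 \<le> (LINT s:{0..t}|lborel. k (X x s \<omega>))"
      unfolding set_lebesgue_integral_def by (rule integral_nonneg_AE) (simp add: k_nonneg)
    then show "0 \<le> E \<omega>" "E \<omega> \<le> 1" unfolding E_def by simp_all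
  qed
  have "integrable M (\<lambda>\<omega>. dist x y * E \<omega>)"
    using E_meas E_bounds by (intro integrable_const_bound[where B = "dist x y"])
      (auto simp: abs_mult intro!: mult_left_le)
  have "W1 (distr M borel (X x t)) (distr M borel (X y t)) \<le> (\<integral>\<^sup>+ \<omega>. ennreal (dist (X x t \<omega>) (X y t \<omega>)) \<partial>M)"
    using prob_space_axioms Xmeas Xmeas by (rule W1_le_nn_integral_dist)
  also have "\<dots> \<le> (\<integral>\<^sup>+ \<omega>. ennreal (dist x y * E \<omega>) \<partial>M)"
    using pathwise by (intro nn_integral_mono) (simp add: ennreal_leI)
  also have "\<dots> = ennreal (dist x y * (\<integral>\<omega>. E \<omega> \<partial>M))"
    using \<open>integrable M _\<close> E_bounds by (subst nn_integral_eq_integral) auto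
  finally show ?thesis unfolding E_def .
qed

lemma exists_norm_ge: "\<exists>y::'a::{real_normed_vector, perfect_space}. r \<le> norm y"
proof -
  obtain y :: 'a where "norm y = \<bar>r\<bar>" by (rule vector_choose_size[OF abs_ge_zero])
  then show ?thesis by (metis abs_ge_self)
qed

lemma rho_inf_le:
  assumes "bdd_below (range \<rho>)" and "norm z \<le> r"
  shows "rho_inf \<rho> r \<le> \<rho> z"
  unfolding rho_inf_def using assms by (intro cInf_lower) (auto simp: bdd_below_def)

lemma rho_inf_antimono:
  fixes \<rho> :: "real^'n \<Rightarrow> real"
  assumes "bdd_below (range \<rho>)" and "0 \<le> r" "r \<le> s"
  shows "rho_inf \<rho> s \<le> rho_inf \<rho> r"
  unfolding rho_inf_def
proof (rule cInf_superset_mono)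
  show "{\<rho> y |y. norm y \<le> r} \<noteq> {}"
    using \<open>0 \<le> r\<close> by (auto intro!: exI[of _ 0])
  show "bdd_below {\<rho> y |y. norm y \<le> s}"
    using assms(1) by (auto simp: bdd_below_def)
qed (use \<open>r \<le> s\<close> in auto)

lemma rho_sup_le:
  assumes "bdd_below (range \<rho>)" and "r \<le> norm z"
  shows "rho_sup \<rho> r \<le> \<rho> z"
  unfolding rho_sup_def using assms by (intro cInf_lower) (auto simp: bdd_below_def)

lemma rho_sup_mono:
  fixes \<rho> :: "real^'n \<Rightarrow> real"
  assumes "bdd_below (range \<rho>)" and "r \<le> s"
  shows "rho_sup \<rho> r \<le> rho_sup \<rho> s"
  unfolding rho_sup_def
proof (rule cInf_superset_mono)
  show "{\<rho> y |y. s \<le> norm y} \<noteq> {}" using exists_norm_ge[of s] by auto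
  show "bdd_below {\<rho> y |y. r \<le> norm y}"
    using assms(1) by (auto simp: bdd_below_def)
qed (use \<open>r \<le> s\<close> in auto)

lemma rho_inf_kernel:
  fixes \<rho> :: "real^'n \<Rightarrow> real" and a d :: real
  assumes \<rho>_nonneg: "\<And>x. 0 \<le> \<rho> x" and "0 \<le> d"
  defines "k \<equiv> \<lambda>v. if a + d < norm v then rho_inf \<rho> (norm v + d) else 0"
  shows "0 \<le> k v" and "dist z v \<le> d \<Longrightarrow> k v \<le> \<rho> z" and "k \<in> borel_measurable borel"
proof -
  have bdd: "bdd_below (range \<rho>)" using \<rho>_nonneg by (auto simp: bdd_below_def)
  show "0 \<le> k v"
    unfolding k_def rho_inf_def using \<rho>_nonneg \<open>0 \<le> d\<close>
    by (auto intro!: cInf_greatest exI[of _ 0])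
  show "k v \<le> \<rho> z" if "dist z v \<le> d"
  proof -
    have "norm z \<le> norm v + d"
      using that norm_triangle_ineq2[of z v] by (simp add: dist_norm)
    then show ?thesis unfolding k_def using rho_inf_le[OF bdd] \<rho>_nonneg by auto
  qed
  (* rho_inf \<rho> r is the junk value Inf {} for r < 0, so it is antitone only on [0..]. *)
  have "mono (\<lambda>r. - rho_inf \<rho> (max 0 r))"
    using rho_inf_antimono[OF bdd] by (auto simp: mono_def max_def)
  then have "(\<lambda>r. rho_inf \<rho> (max 0 r)) \<in> borel_measurable borel"
    using borel_measurable_mono borel_measurable_uminus_eq by blast
  then have "(\<lambda>v::real^'n. if a + d < norm v then rho_inf \<rho> (max 0 (norm v + d)) else 0) \<in> borel_measurable borel"
    by measurable
  moreover have "max 0 (norm v + d) = norm v + d" for v :: "real^'n"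
    using \<open>0 \<le> d\<close> by simp
  ultimately show "k \<in> borel_measurable borel"
    unfolding k_def by (simp only:)
qed

lemma rho_sup_kernel:
  fixes \<rho> :: "real^'n \<Rightarrow> real" and a d :: real
  assumes \<rho>_nonneg: "\<And>x. 0 \<le> \<rho> x"
  defines "k \<equiv> \<lambda>v. if a + d < norm v then rho_sup \<rho> (norm v - d) else 0"
  shows "0 \<le> k v" and "dist z v \<le> d \<Longrightarrow> k v \<le> \<rho> z" and "k \<in> borel_measurable borel"
proof -
  have bdd: "bdd_below (range \<rho>)" using \<rho>_nonneg by (auto simp: bdd_below_def)
  show "0 \<le> k v"
    unfolding k_def rho_sup_def using \<rho>_nonneg exists_norm_ge[of "norm v - d"]
    by (auto intro!: cInf_greatest)
  show "k v \<le> \<rho> z" if "dist z v \<le> d"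
  proof -
    have "norm v - d \<le> norm z"
      using that norm_triangle_ineq2[of v z] by (simp add: dist_norm norm_minus_commute)
    then show ?thesis unfolding k_def using rho_sup_le[OF bdd] \<rho>_nonneg by auto
  qed
  have "mono (rho_sup \<rho>)"
    using rho_sup_mono[OF bdd] by (auto simp: mono_def)
  then have "rho_sup \<rho> \<in> borel_measurable borel" by (rule borel_measurable_mono)
  then show "k \<in> borel_measurable borel" unfolding k_def by measurable
qed

theorem mainTheorem10:
  fixes V :: "real^'n \<Rightarrow> real" and G :: "real^'n \<Rightarrow> real^'n"
    and H :: "real^'n \<Rightarrow> real^'n \<Rightarrow> real^'n"
    and \<rho> :: "real^'n \<Rightarrow> real" and \<rho>\<^sub>0 :: real
    and M :: "'a measure" and B :: "real \<Rightarrow> 'a \<Rightarrow> real^'n"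
    and X :: "real^'n \<Rightarrow> real \<Rightarrow> 'a \<Rightarrow> real^'n"
  assumes V: "C2_grad_hess V G H"
    and Vint: "integrable lborel (\<lambda>x. exp (- V x))"
    and BM: "brownian_motion M B"
    and Xmeas: "\<And>x t. X x t \<in> borel_measurable M"
    and Xcont: "\<And>x \<omega>. \<omega> \<in> space M \<Longrightarrow> continuous_on {0..} (\<lambda>t. X x t \<omega>)"
    and Xsde: "\<And>x \<omega> t. \<omega> \<in> space M \<Longrightarrow> 0 \<le> t \<Longrightarrow>
       X x t \<omega> = x + sqrt 2 *\<^sub>R B t \<omega> - integral {0..t} (\<lambda>s. G (X x s \<omega>))"
    and hess: "\<And>x u. H x u \<bullet> u \<ge> \<rho> x * (norm u)\<^sup>2"
    and rho0: "\<And>x. \<rho> x \<ge> \<rho>\<^sub>0" and "\<rho>\<^sub>0 \<ge> 0"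
  shows
   "(\<forall>a\<ge>0. (\<forall>r s. a < r \<longrightarrow> r \<le> s \<longrightarrow> rho_inf \<rho> s \<le> rho_inf \<rho> r) \<longrightarrow>
      (\<forall>x y t. t \<ge> 0 \<longrightarrow>
        W1 (distr M borel (X x t)) (distr M borel (X y t)) \<le>
        ennreal (dist x y * (\<integral>\<omega>. exp (- (LINT s:{0..t}|lborel.
            (if norm (X x s \<omega>) > a + dist x y
             then rho_inf \<rho> (norm (X x s \<omega>) + dist x y) else 0))) \<partial>M))))
    \<and>
    (\<forall>a\<ge>0. (\<forall>r s. a < r \<longrightarrow> r \<le> s \<longrightarrow> rho_sup \<rho> r \<le> rho_sup \<rho> s) \<longrightarrow>
      (\<forall>x y t. t \<ge> 0 \<longrightarrow>
        W1 (distr M borel (X x t)) (distr M borel (X y t)) \<le>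
        ennreal (dist x y * (\<integral>\<omega>. exp (- (LINT s:{0..t}|lborel.
            (if norm (X x s \<omega>) > a + dist x y
             then rho_sup \<rho> (norm (X x s \<omega>) - dist x y) else 0))) \<partial>M))))"
proof -
  have GH: "\<And>x. (G has_derivative H x) (at x)"
    using V unfolding C2_grad_hess_def by blast
  have "prob_space M"
    using BM unfolding brownian_motion_def by blast
  have \<rho>_nonneg: "0 \<le> \<rho> z" for z
    using rho0[of z] \<open>\<rho>\<^sub>0 \<ge> 0\<close> by linarith
  note W1_bound = W1_le_expectation_exp_integral[OF GH \<open>prob_space M\<close> Xmeas Xcont Xsde hess \<rho>_nonneg]
  show ?thesis
    by (intro conjI allI impI W1_bound rho_inf_kernel[where \<rho> = \<rho>, OF \<rho>_nonneg zero_le_dist]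
        rho_sup_kernel[where \<rho> = \<rho>, OF \<rho>_nonneg])
qed

end
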